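(* Let $\sigma>0$. Let $P_a$ and $P_b$ be the probability distributions on $(0,\infty)$ with densities $$p_a(y)=\sigma^2\, y^{-1-2\sigma^2}\exp\!\left(-\frac{1}{2y^{2\sigma^2}}\right),\qquad p_b(y)=\sqrt{\frac{2}{\pi}}\,\sigma^2\, y^{-1-\sigma^2}\exp\!\left(-\frac{1}{2y^{2\sigma^2}}\right),\qquad y>0.$$ If $a\sim P_a$ and $b\sim P_b$ are independent, then $a\cdot b\sim\mathcal{F}_{\sigma^2}$.
   Context: $\mathcal{F}_{\sigma^2}$ denotes the distribution of $\exp(\tau/\sigma^2)$, where $\tau$ is a standard Gumbel random variable (CDF $P(\tau\le t)=\exp(-e^{-t})$); equivalently, $\mathcal{F}_{\sigma^2}$ is the Fréchet distribution with scale parameter $1$ and shape parameter $\sigma^2$, i.e. with CDF $\exp(-y^{-\sigma^2})$ for $y>0$. *)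

theory Defs
  imports "HOL-Probability.Probability"
begin

definition gumbel_density :: "real \<Rightarrow> real" where
  "gumbel_density t = exp (- t) * exp (- exp (- t))"

definition gumbel_measure :: "real measure" where
  "gumbel_measure = density lborel (\<lambda>t. ennreal (gumbel_density t))"

definition frechet_measure :: "real \<Rightarrow> real measure" where
  "frechet_measure s2 = distr gumbel_measure borel (\<lambda>t. exp (t / s2))"

definition p_a :: "real \<Rightarrow> real \<Rightarrow> real" where
  "p_a \<sigma> y = (if y > 0 then
      \<sigma>\<^sup>2 * y powr (-1 - 2 * \<sigma>\<^sup>2) * exp (- 1 / (2 * y powr (2 * \<sigma>\<^sup>2))) else 0)"

definition p_b :: "real \<Rightarrow> real \<Rightarrow> real" where
  "p_b \<sigma> y = (if y > 0 then
      sqrt (2 / pi) * \<sigma>\<^sup>2 * y powr (-1 - \<sigma>\<^sup>2) * exp (- 1 / (2 * y powr (2 * \<sigma>\<^sup>2))) else 0)"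

end

theory Submission
  imports Defs "HOL-Real_Asymp.Real_Asymp"
begin

(* Conditioning on b, P(a b <= x) = E[F_a(x / b)] with F_a(t) = exp(-t^(-2 sigma^2) / 2), and
   v = b^(-sigma^2) is half-normal. With c = x^(-sigma^2) the expectation becomes
   sqrt(2/pi) * integral over (0,oo) of exp(-(v^2 + c^2 / v^2) / 2), which the Cauchy-Schloemilch
   substitution u = v - c / v evaluates to exp(-c), the Frechet cdf at x. Two real distributions
   with the same cdf coincide. *)

lemma has_integral_gaussian: "((\<lambda>u::real. exp (- u\<^sup>2 / 2)) has_integral sqrt (2 * pi)) UNIV"
proof -
  have "(std_normal_density has_integral 1) UNIV"
    using has_integral_integral_lborel[OF integrable_normal_density[of 1 0]]
      integral_normal_density[of 1 0] by simp
  from has_integral_mult_right[OF this, of "sqrt (2 * pi)"]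
  show ?thesis by (simp add: std_normal_density_def)
qed

lemma has_integral_substitution_nonneg:
  fixes f g g' :: "real \<Rightarrow> real"
  assumes "S \<in> sets lebesgue"
    and "\<And>x. x \<in> S \<Longrightarrow> (g has_real_derivative g' x) (at x within S)"
    and "inj_on g S"
    and "\<And>y. y \<in> g ` S \<Longrightarrow> 0 \<le> f y"
    and "(f has_integral b) (g ` S)"
  shows "((\<lambda>x. \<bar>g' x\<bar> * f (g x)) has_integral b) S"
proof -
  have "f absolutely_integrable_on g ` S \<and> integral (g ` S) f = b"
    using assms(4,5) by (auto intro: nonnegative_absolutely_integrable_1 simp: integral_unique)
  then have "(\<lambda>x. \<bar>g' x\<bar> * f (g x)) absolutely_integrable_on S \<and>
      integral S (\<lambda>x. \<bar>g' x\<bar> * f (g x)) = b"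
    using has_absolute_integral_change_of_variables_1'[OF assms(1-3)] by blast
  then show ?thesis
    using absolutely_integrable_on_def has_integral_integrable_integral by blast
qed

lemma nn_integral_einterval_FTC:
  fixes f F :: "real \<Rightarrow> real" and a b :: ereal
  assumes "a < b"
    and F: "\<And>x. a < ereal x \<Longrightarrow> ereal x < b \<Longrightarrow> DERIV F x :> f x"
    and f: "\<And>x. a < ereal x \<Longrightarrow> ereal x < b \<Longrightarrow> isCont f x"
    and f_nonneg: "\<And>x. a < ereal x \<Longrightarrow> ereal x < b \<Longrightarrow> 0 \<le> f x"
    and A: "((F \<circ> real_of_ereal) \<longlongrightarrow> A) (at_right a)"
    and B: "((F \<circ> real_of_ereal) \<longlongrightarrow> B) (at_left b)"
  shows "(\<integral>\<^sup>+x. ennreal (f x) * indicator (einterval a b) x \<partial>lborel) = ennreal (B - A)"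
proof -
  have "AE x in lborel. a < ereal x \<longrightarrow> ereal x < b \<longrightarrow> 0 \<le> f x" using f_nonneg by auto
  note FTC = interval_integral_FTC_nonneg[OF assms(1) F f this A B]
  have "(\<integral>\<^sup>+x. ennreal (indicator (einterval a b) x *\<^sub>R f x) \<partial>lborel) =
        ennreal (LINT x|lborel. indicator (einterval a b) x *\<^sub>R f x)"
    using FTC(1) unfolding set_integrable_def
    by (rule nn_integral_eq_integral) (auto simp: einterval_def f_nonneg split: split_indicator)
  also have "(LINT x|lborel. indicator (einterval a b) x *\<^sub>R f x) = B - A"
    using FTC(2) less_imp_le[OF \<open>a < b\<close>]
    unfolding interval_lebesgue_integral_def set_lebesgue_integral_def by simp
  finally show ?thesis
    by (subst (asm) nn_integral_cong[where v = "\<lambda>x. ennreal (f x) * indicator (einterval a b) x"])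
      (auto split: split_indicator)
qed

lemma powr_double: "(q::real) > 0 \<Longrightarrow> q powr (2 * s) = (q powr s)\<^sup>2"
  by (simp add: powr_powr[symmetric] powr_numeral mult.commute)

lemma distributed_distr_borel_eq_density:
  assumes "distributed M lborel X f"
  shows "distr M borel X = density lborel f"
proof -
  have "distr M borel X = distr M lborel X"
    using distributed_measurable[OF assms] by (intro distr_cong) auto
  then show ?thesis
    using distributed_distr_eq_density[OF assms] by simp
qed

lemma (in prob_space) emeasure_distr_mult_indep_atMost:
  fixes a b :: "'a \<Rightarrow> real" and g :: "real \<Rightarrow> ennreal"
  assumes indep: "indep_var borel a borel b" and b: "distributed M lborel b g"
  shows "emeasure (distr M borel (\<lambda>\<omega>. a \<omega> * b \<omega>)) {..x} =
    (\<integral>\<^sup>+q. g q * emeasure (distr M borel a) {p. p * q \<le> x} \<partial>lborel)"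
proof -
  define Pa Pb where "Pa = distr M borel a" and "Pb = distr M borel b"
  define A where "A = {z \<in> space (borel \<Otimes>\<^sub>M borel). fst z * snd z \<le> (x :: real)}"
  have [measurable]: "a \<in> borel_measurable M" "b \<in> borel_measurable M"
    using indep by (auto simp: indep_var_distribution_eq)
  have [measurable]: "g \<in> borel_measurable borel"
    using distributed_borel_measurable[OF b] by simp
  interpret Pab: pair_prob_space Pa Pb
    by (simp add: Pa_def Pb_def pair_prob_space_def pair_sigma_finite_def
        prob_space_imp_sigma_finite prob_space_distr)
  have sets_Pab: "sets (Pa \<Otimes>\<^sub>M Pb) = sets (borel \<Otimes>\<^sub>M borel)"
    by (rule sets_pair_measure_cong) (simp_all add: Pa_def Pb_def)
  have A: "A \<in> sets (Pa \<Otimes>\<^sub>M Pb)"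
    unfolding sets_Pab A_def by measurable
  have mult_distr: "distr M borel (\<lambda>\<omega>. a \<omega> * b \<omega>) = distr (Pa \<Otimes>\<^sub>M Pb) borel (\<lambda>(p, q). p * q)"
    using indep unfolding indep_var_distribution_eq Pa_def Pb_def
    by (simp add: distr_distr comp_def)
  have "(\<lambda>(p, q). p * q :: real) \<in> borel_measurable (Pa \<Otimes>\<^sub>M Pb)"
    unfolding measurable_cong_sets[OF sets_Pab refl] by measurable
  then have "emeasure (distr M borel (\<lambda>\<omega>. a \<omega> * b \<omega>)) {..x} = emeasure (Pa \<Otimes>\<^sub>M Pb) A"
    unfolding mult_distr
    by (subst emeasure_distr)
      (auto simp: A_def space_pair_measure Pa_def Pb_def intro!: arg_cong[where f = "emeasure _"])
  also have "\<dots> = (\<integral>\<^sup>+q. emeasure Pa ((\<lambda>p. (p, q)) -` A) \<partial>Pb)"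
    by (rule Pab.emeasure_pair_measure_alt2[OF A])
  also have "\<dots> = (\<integral>\<^sup>+q. g q * emeasure Pa ((\<lambda>p. (p, q)) -` A) \<partial>lborel)"
    using Pab.measurable_emeasure_Pair2[OF A]
    unfolding Pb_def distributed_distr_borel_eq_density[OF b]
    by (subst nn_integral_density) auto
  finally show ?thesis
    by (simp add: A_def Pa_def space_pair_measure)
qed

lemma image_divide_greaterThan_0:
  fixes c :: real
  assumes "c > 0"
  shows "(\<lambda>v. c / v) ` {0<..} = {0<..}"
proof (intro subset_antisym image_subsetI subsetI)
  show "v \<in> (\<lambda>v. c / v) ` {0<..}" if "v \<in> {0<..}" for v
    using that assms by (intro image_eqI[of _ _ "c / v"]) auto
qed (use assms in simp)

lemma strict_mono_on_minus_divide:
  fixes c :: real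
  assumes "c > 0"
  shows "strict_mono_on {0<..} (\<lambda>v. v - c / v)"
  using assms by (auto simp: strict_mono_on_def intro: diff_strict_mono frac_less2)

lemma image_minus_divide_greaterThan_0:
  fixes c :: real
  assumes "c > 0"
  shows "(\<lambda>v. v - c / v) ` {0<..} = UNIV"
proof -
  have "u \<in> (\<lambda>v. v - c / v) ` {0<..}" for u
  proof
    define v where "v = (u + sqrt (u\<^sup>2 + 4 * c)) / 2"
    have "\<bar>u\<bar> < sqrt (u\<^sup>2 + 4 * c)"
      using assms by (intro real_less_rsqrt) simp
    then show v: "v \<in> {0<..}"
      by (auto simp: v_def)
    have "(sqrt (u\<^sup>2 + 4 * c))\<^sup>2 = u\<^sup>2 + 4 * c"
      using assms by simp
    then have "v\<^sup>2 = u * v + c"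
      by (simp add: v_def power2_eq_square field_simps)
    then show "u = v - c / v"
      using v by (simp add: power2_eq_square field_simps)
  qed
  then show ?thesis by blast
qed

lemma has_integral_gaussian_minus_divide:
  fixes c :: real
  assumes "c > 0"
  shows "((\<lambda>v. \<bar>1 + c / v\<^sup>2\<bar> * exp (- (v - c / v)\<^sup>2 / 2)) has_integral sqrt (2 * pi)) {0<..}"
proof (rule has_integral_substitution_nonneg[where g = "\<lambda>v. v - c / v"])
  show "((\<lambda>v. v - c / v) has_real_derivative 1 + c / v\<^sup>2) (at v within {0<..})" if "v \<in> {0<..}" for v
    using that by (auto simp: power2_eq_square intro!: derivative_eq_intros)
  show "inj_on (\<lambda>v. v - c / v) {0<..}"
    using strict_mono_on_minus_divide[OF assms] by (rule strict_mono_on_imp_inj_on)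
  show "((\<lambda>u. exp (- u\<^sup>2 / 2)) has_integral sqrt (2 * pi)) ((\<lambda>v. v - c / v) ` {0<..})"
    using has_integral_gaussian by (simp add: image_minus_divide_greaterThan_0[OF assms])
qed auto

lemma has_integral_exp_square_plus_inverse_square:
  fixes c :: real
  assumes c: "c > 0"
  shows "((\<lambda>v. exp (- (v\<^sup>2 + c\<^sup>2 / v\<^sup>2) / 2)) has_integral sqrt (pi / 2) * exp (- c)) {0<..}"
proof -
  define S :: "real set" where "S = {0<..}"
  define h where "h v = exp (- (v - c / v)\<^sup>2 / 2)" for v :: real
  have S: "S \<in> sets lebesgue" by (simp add: S_def)
  have h_nonneg: "0 \<le> h v" for v by (simp add: h_def)
  have sum: "((\<lambda>v. h v + c / v\<^sup>2 * h v) has_integral sqrt (2 * pi)) S"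
    using has_integral_gaussian_minus_divide[OF c, folded S_def]
    by (rule has_integral_eq[rotated]) (use c in \<open>simp add: S_def h_def algebra_simps\<close>)
  have "h absolutely_integrable_on S"
  proof (rule measurable_bounded_by_integrable_imp_absolutely_integrable[OF _ S])
    show "h \<in> borel_measurable (lebesgue_on S)"
      unfolding h_def S_def by (intro continuous_imp_measurable_on_sets_lebesgue continuous_intros) auto
    show "(\<lambda>v. h v + c / v\<^sup>2 * h v) integrable_on S" using sum by blast
    show "norm (h v) \<le> h v + c / v\<^sup>2 * h v" for v
      using c h_nonneg[of v] by simp
  qed
  then have h: "(h has_integral integral S h) S"
    using absolutely_integrable_on_def has_integral_integral by blast
  txt \<open>The inversion \<open>v \<mapsto> c / v\<close> preserves \<open>S\<close> and \<open>h\<close>, so both summands above have the same integral.\<close>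
  have mirrored: "((\<lambda>v. \<bar>- c / v\<^sup>2\<bar> * h (c / v)) has_integral integral S h) S"
  proof (rule has_integral_substitution_nonneg[OF S, where g = "\<lambda>v. c / v" and g' = "\<lambda>v. - c / v\<^sup>2"])
    show "((\<lambda>v. c / v) has_real_derivative - c / v\<^sup>2) (at v within S)" if "v \<in> S" for v
      using that by (auto simp: S_def power2_eq_square intro!: derivative_eq_intros)
    show "inj_on (\<lambda>v. c / v) S" using c by (auto simp: S_def inj_on_def)
    show "(h has_integral integral S h) ((\<lambda>v. c / v) ` S)"
      using h by (simp add: S_def image_divide_greaterThan_0[OF c])
  qed (simp add: h_nonneg)
  have mirror: "\<bar>- c / v\<^sup>2\<bar> * h (c / v) = c / v\<^sup>2 * h v" if "v \<in> S" for v
  proof -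
    have "c / (c / v) = v" using that c by (simp add: S_def)
    then show ?thesis using c by (simp add: h_def power2_commute)
  qed
  have "((\<lambda>v. c / v\<^sup>2 * h v) has_integral integral S h) S"
    by (rule has_integral_eq[OF mirror mirrored])
  from has_integral_unique[OF sum has_integral_add[OF h this]]
  have "integral S h = sqrt (2 * pi) / 2"
    by simp
  also have "\<dots> = sqrt (pi / 2)"
  proof -
    have "pi / 2 = (2 * pi) / 2\<^sup>2" by (simp add: power2_eq_square)
    then show ?thesis by (simp only: real_sqrt_divide real_sqrt_abs)
  qed
  finally have J: "integral S h = sqrt (pi / 2)" .
  have completed_square: "exp (- c) * h v = exp (- (v\<^sup>2 + c\<^sup>2 / v\<^sup>2) / 2)" if "v \<in> S" for v
  proof -
    have "(v - c / v)\<^sup>2 = v\<^sup>2 + c\<^sup>2 / v\<^sup>2 - 2 * c"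
      using that by (simp add: S_def power2_diff power_divide)
    then show ?thesis by (simp add: h_def field_simps flip: exp_add)
  qed
  show ?thesis
    using has_integral_eq[OF completed_square has_integral_mult_right[OF h, of "exp (- c)"]] J
    by (simp add: S_def mult.commute)
qed

lemma image_powr_neg_pos:
  fixes s :: real
  assumes "s > 0"
  shows "(\<lambda>q. q powr - s) ` {0<..} = {0<..}"
proof (intro subset_antisym image_subsetI subsetI)
  show "v \<in> (\<lambda>q. q powr - s) ` {0<..}" if "v \<in> {0<..}" for v
    using that assms by (intro image_eqI[of _ _ "v powr (- 1 / s)"]) (auto simp: powr_powr)
qed simp

lemma has_integral_powr_substitution:
  fixes f :: "real \<Rightarrow> real" and s :: real
  assumes s: "s > 0"
    and f_nonneg: "\<And>v. v > 0 \<Longrightarrow> 0 \<le> f v"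
    and f: "(f has_integral b) {0<..}"
  shows "((\<lambda>q. s * q powr (- 1 - s) * f (q powr - s)) has_integral b) {0<..}"
proof -
  have "((\<lambda>q. \<bar>- s * q powr (- s - 1)\<bar> * f (q powr - s)) has_integral b) {0<..}"
  proof (rule has_integral_substitution_nonneg[where g = "\<lambda>q. q powr - s" and g' = "\<lambda>q. - s * q powr (- s - 1)"])
    show "((\<lambda>q. q powr - s) has_real_derivative - s * q powr (- s - 1)) (at q within {0<..})"
      if "q \<in> {0<..}" for q
      using that by (auto intro!: derivative_eq_intros)
    show "inj_on (\<lambda>q. q powr - s) {0<..}"
    proof (rule inj_onI)
      fix q r :: real assume "q \<in> {0<..}" "r \<in> {0<..}" "q powr - s = r powr - s"
      then have "(q powr - s) powr (- 1 / s) = (r powr - s) powr (- 1 / s)" by simp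
      with \<open>q \<in> {0<..}\<close> \<open>r \<in> {0<..}\<close> s show "q = r" by (simp add: powr_powr)
    qed
  qed (use s f f_nonneg image_powr_neg_pos[OF s] in auto)
  moreover have "- s - 1 = - 1 - s" by simp
  ultimately show ?thesis
    using s by (simp add: abs_mult)
qed

lemma gumbel_density_nonneg: "0 \<le> gumbel_density t"
  by (simp add: gumbel_density_def)

lemma borel_measurable_gumbel_density [measurable]: "gumbel_density \<in> borel_measurable borel"
  unfolding gumbel_density_def by measurable

lemma gumbel_cdf_has_derivative:
  "((\<lambda>t. exp (- exp (- t))) has_real_derivative gumbel_density t) (at t)"
  unfolding gumbel_density_def by (auto intro!: derivative_eq_intros)

lemma nn_integral_gumbel_density:
  fixes b :: ereal
  assumes "-\<infinity> < b" and B: "(((\<lambda>t. exp (- exp (- t))) \<circ> real_of_ereal) \<longlongrightarrow> B) (at_left b)"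
  shows "(\<integral>\<^sup>+x. ennreal (gumbel_density x) * indicator (einterval (-\<infinity>) b) x \<partial>lborel) = ennreal B"
proof -
  have "((\<lambda>t::real. exp (- exp (- t))) \<longlongrightarrow> 0) at_bot"
    by real_asymp
  then have "(((\<lambda>t. exp (- exp (- t))) \<circ> real_of_ereal) \<longlongrightarrow> 0) (at_right (-\<infinity>))"
    by (simp add: ereal_tendsto_simps)
  from nn_integral_einterval_FTC[OF assms(1) gumbel_cdf_has_derivative _ gumbel_density_nonneg this B]
  show ?thesis
    by (simp add: gumbel_density_def)
qed

lemma emeasure_gumbel_atMost: "emeasure gumbel_measure {..T} = ennreal (exp (- exp (- T)))"
proof -
  have "emeasure gumbel_measure {..T} =
      (\<integral>\<^sup>+x. ennreal (gumbel_density x) * indicator (einterval (-\<infinity>) (ereal T)) x \<partial>lborel)"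
    unfolding gumbel_measure_def
    by (subst emeasure_density, simp, simp, intro nn_integral_cong_AE)
      (use AE_lborel_singleton[of T] in \<open>eventually_elim, auto simp: einterval_def split: split_indicator\<close>)
  also have "\<dots> = ennreal (exp (- exp (- T)))"
    by (rule nn_integral_gumbel_density) (auto simp: ereal_tendsto_simps intro!: tendsto_eq_intros)
  finally show ?thesis .
qed

lemma prob_space_gumbel: "prob_space gumbel_measure"
proof (rule prob_spaceI)
  have "((\<lambda>t::real. exp (- exp (- t))) \<longlongrightarrow> 1) at_top"
    by real_asymp
  then have "(\<integral>\<^sup>+x. ennreal (gumbel_density x) * indicator (einterval (-\<infinity>) \<infinity>) x \<partial>lborel) = 1"
    by (subst nn_integral_gumbel_density) (auto simp: ereal_tendsto_simps)
  then have "emeasure gumbel_measure UNIV = 1"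
    unfolding gumbel_measure_def by (subst emeasure_density) auto
  then show "emeasure gumbel_measure (space gumbel_measure) = 1"
    by (simp add: gumbel_measure_def)
qed

lemma real_distribution_frechet: "real_distribution (frechet_measure s)"
proof -
  have "(\<lambda>t. exp (t / s)) \<in> borel_measurable gumbel_measure"
    by (simp add: gumbel_measure_def)
  then show ?thesis
    unfolding real_distribution_def real_distribution_axioms_def frechet_measure_def
    using prob_space.prob_space_distr[OF prob_space_gumbel] by auto
qed

lemma emeasure_frechet_atMost:
  fixes s x :: real
  assumes "s > 0"
  shows "emeasure (frechet_measure s) {..x} = (if x > 0 then ennreal (exp (- (x powr - s))) else 0)"
proof -
  have "emeasure (frechet_measure s) {..x} = emeasure gumbel_measure ((\<lambda>t. exp (t / s)) -` {..x})"
    unfolding frechet_measure_def by (subst emeasure_distr) (auto simp: gumbel_measure_def)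
  also have "\<dots> = (if x > 0 then ennreal (exp (- (x powr - s))) else 0)"
  proof (cases "x > 0")
    case True
    then have "(\<lambda>t. exp (t / s)) -` {..x} = {..s * ln x}"
      using assms by (auto simp: ln_ge_iff[symmetric] pos_divide_le_eq mult.commute)
    moreover have "exp (- (s * ln x)) = x powr - s"
      using True by (simp add: powr_def)
    ultimately show ?thesis
      using True by (simp add: emeasure_gumbel_atMost)
  next
    case False
    have "\<not> exp (t / s) \<le> x" for t
      using False exp_gt_zero[of "t / s"] by linarith
    then have "(\<lambda>t. exp (t / s)) -` {..x} = {}"
      by auto
    then show ?thesis
      using False by simp
  qed
  finally show ?thesis .
qed

lemma p_a_cdf_has_derivative:
  fixes \<sigma> y :: real
  assumes "y > 0"
  shows "((\<lambda>y. exp (- 1 / (2 * y powr (2 * \<sigma>\<^sup>2)))) has_real_derivative p_a \<sigma> y) (at y)"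
proof -
  define r where "r = 2 * \<sigma>\<^sup>2"
  define Q where "Q = y powr r"
  have "Q > 0" using assms by (simp add: Q_def)
  have "((\<lambda>y. exp (- 1 / (2 * y powr r))) has_real_derivative
      exp (- 1 / (2 * Q)) * ((2 * (r * y powr (r - 1))) / (2 * Q)\<^sup>2)) (at y)"
    using assms by (auto intro!: derivative_eq_intros simp: Q_def power2_eq_square)
  moreover have "y powr (r - 1) = Q / y" "y powr (- 1 - r) = 1 / (y * Q)"
    using assms powr_minus_divide[of y "1 + r"] by (simp_all add: Q_def powr_diff powr_add)
  moreover have "exp (- 1 / (2 * Q)) * ((2 * (r * (Q / y))) / (2 * Q)\<^sup>2) =
      \<sigma>\<^sup>2 * (1 / (y * Q)) * exp (- 1 / (2 * Q))"
    using assms \<open>Q > 0\<close> by (simp add: r_def field_simps power2_eq_square)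
  ultimately show ?thesis
    using assms unfolding p_a_def r_def[symmetric] Q_def[symmetric] by simp
qed

lemma borel_measurable_p_a [measurable]: "p_a \<sigma> \<in> borel_measurable borel"
  unfolding p_a_def by measurable

lemma emeasure_p_a_atMost:
  fixes \<sigma> t :: real
  assumes "\<sigma> > 0"
  shows "emeasure (density lborel (\<lambda>y. ennreal (p_a \<sigma> y))) {..t} =
    (if t > 0 then ennreal (exp (- 1 / (2 * t powr (2 * \<sigma>\<^sup>2)))) else 0)"
proof -
  define F where "F = (\<lambda>y::real. exp (- 1 / (2 * y powr (2 * \<sigma>\<^sup>2))))"
  define f where "f y = \<sigma>\<^sup>2 * y powr (- 1 - 2 * \<sigma>\<^sup>2) * F y" for y :: real
  have p_a_eq: "p_a \<sigma> y = (if y > 0 then f y else 0)" for y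
    by (simp add: p_a_def f_def F_def)
  have "emeasure (density lborel (\<lambda>y. ennreal (p_a \<sigma> y))) {..t} =
      (\<integral>\<^sup>+y. ennreal (f y) * indicator (einterval 0 (ereal t)) y \<partial>lborel)"
    by (subst emeasure_density, simp, simp, intro nn_integral_cong_AE)
      (use AE_lborel_singleton[of t] in \<open>eventually_elim, auto simp: einterval_def p_a_eq split: split_indicator\<close>)
  also have "\<dots> = (if t > 0 then ennreal (F t - 0) else 0)"
  proof (cases "t > 0")
    case True
    have "(F \<longlongrightarrow> 0) (at_right 0)"
      unfolding F_def using assms by real_asymp
    moreover have "(F \<longlongrightarrow> F t) (at_left t)"
      unfolding F_def using True by (auto intro!: tendsto_eq_intros)
    ultimately have "(\<integral>\<^sup>+y. ennreal (f y) * indicator (einterval 0 (ereal t)) y \<partial>lborel) = ennreal (F t - 0)"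
      using True p_a_cdf_has_derivative[of _ \<sigma>]
      by (intro nn_integral_einterval_FTC[where F = F])
        (auto simp: ereal_tendsto_simps zero_ereal_def p_a_eq F_def f_def intro!: continuous_intros)
    then show ?thesis using True by simp
  next
    case False
    then have "einterval 0 (ereal t) = {}" by (auto simp: einterval_def)
    then show ?thesis using False by simp
  qed
  finally show ?thesis by (simp add: F_def)
qed

lemma p_b_nonneg: "0 \<le> p_b \<sigma> y"
  by (simp add: p_b_def)

lemma p_b_times_shifted_p_a_cdf:
  fixes \<sigma> x q :: real
  assumes "x > 0" "q > 0"
  defines "c \<equiv> x powr - \<sigma>\<^sup>2"
  shows "p_b \<sigma> q * exp (- 1 / (2 * (x / q) powr (2 * \<sigma>\<^sup>2))) =
    sqrt (2 / pi) * (\<sigma>\<^sup>2 * q powr (- 1 - \<sigma>\<^sup>2) *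
      exp (- ((q powr - \<sigma>\<^sup>2)\<^sup>2 + c\<^sup>2 / (q powr - \<sigma>\<^sup>2)\<^sup>2) / 2))"
proof -
  define P X where "P = q powr \<sigma>\<^sup>2" and "X = x powr \<sigma>\<^sup>2"
  have "P > 0" "X > 0" using assms(1,2) by (auto simp: P_def X_def)
  have powers: "q powr (2 * \<sigma>\<^sup>2) = P\<^sup>2" "(x / q) powr (2 * \<sigma>\<^sup>2) = X\<^sup>2 / P\<^sup>2"
    "q powr - \<sigma>\<^sup>2 = 1 / P" "c = 1 / X"
    using assms(1,2) by (simp_all add: P_def X_def c_def powr_double powr_divide power_divide
        powr_minus_divide)
  have "- 1 / (2 * P\<^sup>2) + - 1 / (2 * (X\<^sup>2 / P\<^sup>2)) = - ((1 / P)\<^sup>2 + (1 / X)\<^sup>2 / (1 / P)\<^sup>2) / 2"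
    using \<open>P > 0\<close> \<open>X > 0\<close> by (simp add: field_simps)
  then have "exp (- 1 / (2 * P\<^sup>2)) * exp (- 1 / (2 * (X\<^sup>2 / P\<^sup>2))) =
      exp (- ((1 / P)\<^sup>2 + (1 / X)\<^sup>2 / (1 / P)\<^sup>2) / 2)"
    by (simp only: exp_add[symmetric])
  then show ?thesis
    using assms(2) unfolding p_b_def powers by (simp only: if_True mult.assoc)
qed

lemma has_integral_p_b_times_shifted_p_a_cdf:
  fixes \<sigma> x :: real
  assumes "\<sigma> > 0" "x > 0"
  shows "((\<lambda>q. p_b \<sigma> q * exp (- 1 / (2 * (x / q) powr (2 * \<sigma>\<^sup>2))))
    has_integral exp (- (x powr - \<sigma>\<^sup>2))) {0<..}"
proof -
  define c where "c = x powr - \<sigma>\<^sup>2"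
  have "c > 0" using assms by (simp add: c_def)
  have "((\<lambda>q. \<sigma>\<^sup>2 * q powr (- 1 - \<sigma>\<^sup>2) *
      exp (- ((q powr - \<sigma>\<^sup>2)\<^sup>2 + c\<^sup>2 / (q powr - \<sigma>\<^sup>2)\<^sup>2) / 2))
      has_integral sqrt (pi / 2) * exp (- c)) {0<..}"
    using assms \<open>c > 0\<close>
    by (intro has_integral_powr_substitution has_integral_exp_square_plus_inverse_square) auto
  from has_integral_mult_right[OF this, of "sqrt (2 / pi)"]
  have "((\<lambda>q. p_b \<sigma> q * exp (- 1 / (2 * (x / q) powr (2 * \<sigma>\<^sup>2))))
      has_integral sqrt (2 / pi) * (sqrt (pi / 2) * exp (- c))) {0<..}"
    by (rule has_integral_eq[rotated])
      (use p_b_times_shifted_p_a_cdf[OF assms(2)] in \<open>simp add: c_def\<close>)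
  moreover have "sqrt (2 / pi) * sqrt (pi / 2) = 1"
    by (simp flip: real_sqrt_mult)
  ultimately show ?thesis by (simp add: c_def mult.assoc[symmetric])
qed

lemma nn_integral_p_b_times_p_a_cdf:
  fixes \<sigma> x :: real
  assumes "\<sigma> > 0"
  shows "(\<integral>\<^sup>+q. ennreal (p_b \<sigma> q) * emeasure (density lborel (\<lambda>y. ennreal (p_a \<sigma> y))) {p. p * q \<le> x} \<partial>lborel) =
    (if x > 0 then ennreal (exp (- (x powr - \<sigma>\<^sup>2))) else 0)"
proof -
  have "ennreal (p_b \<sigma> q) * emeasure (density lborel (\<lambda>y. ennreal (p_a \<sigma> y))) {p. p * q \<le> x} =
      (if x > 0 then ennreal (p_b \<sigma> q * exp (- 1 / (2 * (x / q) powr (2 * \<sigma>\<^sup>2)))) * indicator {0<..} q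
       else 0)" for q
  proof (cases "q > 0")
    case True
    then have "{p. p * q \<le> x} = {..x / q}"
      by (auto simp: pos_le_divide_eq)
    then show ?thesis
      using True assms by (simp add: emeasure_p_a_atMost zero_less_divide_iff p_b_nonneg ennreal_mult')
  next
    case False
    then show ?thesis by (simp add: p_b_def)
  qed
  moreover have "(\<integral>\<^sup>+q. ennreal (p_b \<sigma> q * exp (- 1 / (2 * (x / q) powr (2 * \<sigma>\<^sup>2)))) * indicator {0<..} q \<partial>lborel) =
      ennreal (exp (- (x powr - \<sigma>\<^sup>2)))" if "x > 0"
    by (rule nn_integral_has_integral_lebesgue'[OF _ has_integral_p_b_times_shifted_p_a_cdf[OF assms that]])
      (simp add: p_b_nonneg)
  ultimately show ?thesis
    by simp
qed

theorem proposition1: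
  fixes M :: "'m measure" and a b :: "'m \<Rightarrow> real" and \<sigma> :: real
  assumes "prob_space M"
    and "\<sigma> > 0"
    and "distributed M lborel a (\<lambda>y. ennreal (p_a \<sigma> y))"
    and "distributed M lborel b (\<lambda>y. ennreal (p_b \<sigma> y))"
    and "prob_space.indep_var M borel a borel b"
  shows "distr M borel (\<lambda>\<omega>. a \<omega> * b \<omega>) = frechet_measure (\<sigma>\<^sup>2)"
proof -
  interpret prob_space M by fact
  have [measurable]: "a \<in> borel_measurable M" "b \<in> borel_measurable M"
    using distributed_measurable[OF assms(3)] distributed_measurable[OF assms(4)] by simp_all
  have "emeasure (distr M borel (\<lambda>\<omega>. a \<omega> * b \<omega>)) {..x} = emeasure (frechet_measure (\<sigma>\<^sup>2)) {..x}" for x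
    using assms(2)
    by (simp add: emeasure_distr_mult_indep_atMost[OF assms(5,4)] emeasure_frechet_atMost
        distributed_distr_borel_eq_density[OF assms(3)] nn_integral_p_b_times_p_a_cdf)
  moreover have "real_distribution (distr M borel (\<lambda>\<omega>. a \<omega> * b \<omega>))"
    by (simp add: real_distribution_def real_distribution_axioms_def prob_space_distr)
  ultimately show ?thesis
    using real_distribution_frechet by (intro cdf_unique) (auto simp: cdf_def2 measure_def)
qed

end
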